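(* Let $u$ be a one-sided Sturmian sequence and $(X_u^+,\sigma)$ its associated Sturmian system. In the HB diagram of $X_u^+$, for every $n\ge1$ there are exactly $n+1$ paths of length $n$ starting from either the vertex $0$ or the vertex $1$.
   Context: A sequence $u\in\{0,1\}^{\mathbb N}$ is Sturmian if for every $n\ge1$ exactly $n+1$ distinct blocks of length $n$ occur in $u$. $X_u^+$ is the closure of $\{\sigma^n u:n\in\mathbb N\}$, $\sigma$ the shift $(\sigma x)_i=x_{i+1}$, and $\tilde X_u=\{x\in\{0,1\}^{\mathbb Z}: x_px_{p+1}\dots\in X_u^+\ \forall p\}$ its natural extension. For a block $a_{-n}\dots a_0$ occurring in $\tilde X_u$, $\mathrm{fol}(a_{-n}\dots a_0)=\{b_0b_1\dots\in X_u^+:\exists b\in\tilde X_u,\ b_{-n}\dots b_0=a_{-n}\dots a_0\}$. A block $a_{-n}\dots a_0$ ($n\ge1$) is significant if $\mathrm{fol}(a_{-n}\dots a_0)\subsetneq\mathrm{fol}(a_{-n+1}\dots a_0)$; the blocks $0$ and $1$ are also significant. $\mathrm{sig}(\cdot)$ is the longest significant suffix. The HB diagram has vertex set the significant blocks and an arrow $\alpha\to\beta$ iff there is a symbol $b$ with $\alpha b$ occurring in $\tilde X_u$ and $\beta=\mathrm{sig}(\alpha b)$. The length of a path is its number of vertices. *)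

theory Defs
  imports Main
begin

text \<open>Sequences over the alphabet {0,1} are modelled as nat \<Rightarrow> nat (one-sided)
  and int \<Rightarrow> nat (two-sided). Blocks are lists; a block a_{-n}...a_0 is the list
  [a_{-n}, ..., a_0].\<close>

definition blocks_of :: "(nat \<Rightarrow> nat) \<Rightarrow> nat \<Rightarrow> nat list set" where
  "blocks_of u n = {map (\<lambda>i. u (m + i)) [0..<n] | m. True}"

definition sturmian :: "(nat \<Rightarrow> nat) \<Rightarrow> bool" where
  "sturmian u \<longleftrightarrow> (\<forall>i. u i \<in> {0, 1}) \<and> (\<forall>n\<ge>1. card (blocks_of u n) = n + 1)"

text \<open>Closure of the orbit of u in the product topology on {0,1}^N (cylinder sets
  form a basis): x is in the closure iff every neighbourhood [x_0..x_{n-1}] meets the orbit.\<close>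
definition Xplus :: "(nat \<Rightarrow> nat) \<Rightarrow> (nat \<Rightarrow> nat) set" where
  "Xplus u = {x. \<forall>n. \<exists>m. \<forall>i<n. x i = u (m + i)}"

definition Xtilde :: "(nat \<Rightarrow> nat) \<Rightarrow> (int \<Rightarrow> nat) set" where
  "Xtilde u = {x. \<forall>p::int. (\<lambda>i::nat. x (p + int i)) \<in> Xplus u}"

text \<open>ends_with b a: b_{-n}...b_0 = a_{-n}...a_0 where length a = n+1.\<close>
definition ends_with :: "(int \<Rightarrow> nat) \<Rightarrow> nat list \<Rightarrow> bool" where
  "ends_with b a \<longleftrightarrow> (\<forall>i<length a. b (int i - int (length a) + 1) = a ! i)"

definition occurs :: "(nat \<Rightarrow> nat) \<Rightarrow> nat list \<Rightarrow> bool" where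
  "occurs u a \<longleftrightarrow> (\<exists>b\<in>Xtilde u. ends_with b a)"

definition fol :: "(nat \<Rightarrow> nat) \<Rightarrow> nat list \<Rightarrow> (nat \<Rightarrow> nat) set" where
  "fol u a = (\<lambda>b. \<lambda>i::nat. b (int i)) ` {b \<in> Xtilde u. ends_with b a}"

definition significant :: "(nat \<Rightarrow> nat) \<Rightarrow> nat list \<Rightarrow> bool" where
  "significant u a \<longleftrightarrow> occurs u a \<and>
     (a = [0] \<or> a = [1] \<or> (length a \<ge> 2 \<and> fol u a \<subset> fol u (tl a)))"

text \<open>Longest significant suffix (suffixes are nonempty; drop k removes the k oldest symbols).\<close>
definition sig :: "(nat \<Rightarrow> nat) \<Rightarrow> nat list \<Rightarrow> nat list" where
  "sig u a = drop (LEAST k. k < length a \<and> significant u (drop k a)) a"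

definition hb_arrow :: "(nat \<Rightarrow> nat) \<Rightarrow> nat list \<Rightarrow> nat list \<Rightarrow> bool" where
  "hb_arrow u \<alpha> \<beta> \<longleftrightarrow> significant u \<alpha> \<and> significant u \<beta> \<and>
     (\<exists>c. occurs u (\<alpha> @ [c]) \<and> \<beta> = sig u (\<alpha> @ [c]))"

text \<open>A path is a list of vertices; its length is its number of vertices.\<close>
definition hb_path :: "(nat \<Rightarrow> nat) \<Rightarrow> nat list list \<Rightarrow> bool" where
  "hb_path u p \<longleftrightarrow> p \<noteq> [] \<and> (\<forall>v\<in>set p. significant u v) \<and>
     (\<forall>i. Suc i < length p \<longrightarrow> hb_arrow u (p ! i) (p ! Suc i))"

end

theory Submission
  imports Defs
begin

text \<open>A path of length n starting at a one-letter vertex is determined by the word formed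
  by the last letters of its vertices, and conversely every word w of length n occurring in
  the natural extension yields such a path, namely the longest significant suffixes of the
  prefixes of w: appending a letter to a block and to its longest significant suffix gives
  the same follower set, hence the same longest significant suffix. So these paths are in
  bijection with the blocks of length n of the natural extension. These are exactly the
  n + 1 blocks of u, because a Sturmian sequence is recurrent (a non-recurrent block would
  force an eventually periodic tail and hence bounded complexity), and recurrence lets
  every point of the orbit closure be extended to the left.\<close>

definition factor :: "(nat \<Rightarrow> nat) \<Rightarrow> nat \<Rightarrow> nat \<Rightarrow> nat list" where
  "factor s m n = map (\<lambda>i. s (m + i)) [0..<n]"

lemma blocks_of_eq_range_factor: "blocks_of s n = range (\<lambda>m. factor s m n)"
  unfolding blocks_of_def factor_def by auto

lemma length_factor [simp]: "length (factor s m n) = n"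
  by (simp add: factor_def)

lemma nth_factor [simp]: "i < n \<Longrightarrow> factor s m n ! i = s (m + i)"
  by (simp add: factor_def)

lemma factor_eq_iff: "factor s i n = factor s j n \<longleftrightarrow> (\<forall>t<n. s (i + t) = s (j + t))"
  by (auto simp: list_eq_iff_nth_eq)

lemma take_factor: "k \<le> n \<Longrightarrow> take k (factor s m n) = factor s m k"
  by (simp add: factor_def take_map)

lemma factor_Suc: "factor s m (Suc n) = factor s m n @ [s (m + n)]"
  by (simp add: factor_def)

lemma factor_suffix: "factor (\<lambda>i. s (N + i)) m n = factor s (N + m) n"
  by (simp add: factor_def add.assoc)

lemma blocks_of_0: "blocks_of s 0 = {[]}"
  by (auto simp: blocks_of_eq_range_factor factor_def)

lemma finite_blocks_of:
  assumes bin: "\<forall>i. s i \<in> {0,1}"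
  shows "finite (blocks_of s n)"
proof (rule finite_subset)
  show "blocks_of s n \<subseteq> {xs. set xs \<subseteq> {0,1} \<and> length xs = n}"
    using bin by (force simp: blocks_of_eq_range_factor factor_def)
  show "finite {xs. set xs \<subseteq> {0::nat,1} \<and> length xs = n}"
    by (rule finite_lists_length_eq) simp
qed

lemma take_image_blocks_of: "k \<le> n \<Longrightarrow> take k ` blocks_of s n = blocks_of s k"
  by (auto simp: blocks_of_eq_range_factor take_factor image_iff)

lemma card_blocks_of_mono:
  assumes bin: "\<forall>i. s i \<in> {0,1}" and "k \<le> n"
  shows "card (blocks_of s k) \<le> card (blocks_of s n)"
  using card_image_le[OF finite_blocks_of[OF bin], of "take k" n]
  by (simp add: take_image_blocks_of[OF \<open>k \<le> n\<close>])

text \<open>If the complexity grows at every length up to L, it exceeds L at length L. So a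
  complexity at most L forces a length k < L without right special block, i.e. where every
  block of length k has a unique right extension.\<close>

lemma exists_length_without_right_special:
  assumes bin: "\<forall>i. s i \<in> {0,1}" and le: "card (blocks_of s L) \<le> L"
  shows "\<exists>k<L. inj_on (take k) (blocks_of s (Suc k))"
proof (rule ccontr)
  assume "\<not> ?thesis"
  hence not_inj: "\<And>k. k < L \<Longrightarrow> \<not> inj_on (take k) (blocks_of s (Suc k))" by blast
  have "k \<le> L \<Longrightarrow> k + 1 \<le> card (blocks_of s k)" for k
  proof (induction k)
    case 0
    show ?case by (simp add: blocks_of_0)
  next
    case (Suc k)
    have fin: "finite (blocks_of s (Suc k))" by (rule finite_blocks_of[OF bin])
    have "card (take k ` blocks_of s (Suc k)) \<noteq> card (blocks_of s (Suc k))"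
      using not_inj[of k] Suc.prems fin eq_card_imp_inj_on by fastforce
    moreover have "card (take k ` blocks_of s (Suc k)) \<le> card (blocks_of s (Suc k))"
      using fin card_image_le by blast
    ultimately have "card (blocks_of s k) < card (blocks_of s (Suc k))"
      using take_image_blocks_of[of k "Suc k" s] by simp
    thus ?case using Suc by simp
  qed
  from this[of L] le show False by simp
qed

lemma factor_eq_imp_tail_eq:
  assumes inj: "inj_on (take k) (blocks_of s (Suc k))"
    and eq: "factor s i k = factor s j k"
  shows "s (i + t) = s (j + t)"
proof -
  have next_eq: "s (a + k) = s (b + k)" if "factor s a k = factor s b k" for a b
  proof -
    have "factor s a (Suc k) = factor s b (Suc k)"
      using inj_onD[OF inj, of "factor s a (Suc k)" "factor s b (Suc k)"] that
      by (simp add: take_factor blocks_of_eq_range_factor)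
    thus ?thesis by (simp add: factor_Suc)
  qed
  have shifted: "factor s (i + r) k = factor s (j + r) k" for r
  proof (induction r)
    case 0
    show ?case using eq by simp
  next
    case (Suc r)
    have "s (i + r + k) = s (j + r + k)" using next_eq[OF Suc] .
    moreover have "\<forall>t<k. s (i + r + t) = s (j + r + t)" using Suc by (simp add: factor_eq_iff)
    ultimately have "\<forall>t<Suc k. s (i + r + t) = s (j + r + t)"
      by (metis less_antisym)
    hence "\<forall>t<k. s (i + Suc r + t) = s (j + Suc r + t)"
      by (metis Suc_less_eq add_Suc_right add_Suc_shift)
    thus ?case by (simp add: factor_eq_iff)
  qed
  show ?thesis
  proof (cases "t < k")
    case True
    thus ?thesis using eq by (simp add: factor_eq_iff)
  next
    case False
    then obtain r where "t = r + k" by (metis add.commute le_add_diff_inverse not_less)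
    thus ?thesis using next_eq[OF shifted[of r]] by (simp add: add.assoc)
  qed
qed

lemma card_blocks_of_le_if_no_right_special:
  assumes bin: "\<forall>i. s i \<in> {0,1}" and inj: "inj_on (take k) (blocks_of s (Suc k))"
    and "k \<le> n"
  shows "card (blocks_of s n) \<le> card (blocks_of s k)"
proof -
  have "inj_on (take k) (blocks_of s n)"
  proof (rule inj_onI)
    fix x y assume "x \<in> blocks_of s n" "y \<in> blocks_of s n" "take k x = take k y"
    then obtain i j where x: "x = factor s i n" and y: "y = factor s j n"
      and "factor s i k = factor s j k"
      using \<open>k \<le> n\<close> by (auto simp: blocks_of_eq_range_factor take_factor)
    hence "\<forall>t. s (i + t) = s (j + t)" using factor_eq_imp_tail_eq[OF inj] by blast
    thus "x = y" using x y by (simp add: factor_eq_iff)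
  qed
  moreover have "take k ` blocks_of s n \<subseteq> blocks_of s k"
    using take_image_blocks_of[OF \<open>k \<le> n\<close>] by simp
  ultimately show ?thesis using card_inj_on_le finite_blocks_of[OF bin] by blast
qed

lemma card_blocks_of_le_suffix:
  assumes bin: "\<forall>i. s i \<in> {0,1}"
  shows "card (blocks_of s n) \<le> N + card (blocks_of (\<lambda>i. s (N + i)) n)"
proof -
  have "blocks_of s n \<subseteq> (\<lambda>m. factor s m n) ` {..<N} \<union> blocks_of (\<lambda>i. s (N + i)) n"
  proof
    fix x assume "x \<in> blocks_of s n"
    then obtain m where x: "x = factor s m n" by (auto simp: blocks_of_eq_range_factor)
    show "x \<in> (\<lambda>m. factor s m n) ` {..<N} \<union> blocks_of (\<lambda>i. s (N + i)) n"
    proof (cases "m < N")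
      case True
      thus ?thesis using x by auto
    next
      case False
      hence "x = factor (\<lambda>i. s (N + i)) (m - N) n" using x by (simp add: factor_suffix)
      thus ?thesis by (auto simp: blocks_of_eq_range_factor)
    qed
  qed
  hence "card (blocks_of s n)
      \<le> card ((\<lambda>m. factor s m n) ` {..<N} \<union> blocks_of (\<lambda>i. s (N + i)) n)"
    using bin finite_blocks_of[of "\<lambda>i. s (N + i)"] by (intro card_mono) auto
  also have "\<dots> \<le> card ((\<lambda>m. factor s m n) ` {..<N}) + card (blocks_of (\<lambda>i. s (N + i)) n)"
    by (rule card_Un_le)
  also have "\<dots> \<le> N + card (blocks_of (\<lambda>i. s (N + i)) n)"
    using card_image_le[of "{..<N}" "\<lambda>m. factor s m n"] by simp
  finally show ?thesis .
qed

lemma sturmian_factor_recurs: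
  assumes st: "sturmian u"
  shows "\<exists>m'\<ge>N. factor u m' L = factor u m L"
proof (rule ccontr)
  assume no_recurrence: "\<not> ?thesis"
  have bin: "\<forall>i. u i \<in> {0,1}" using st by (simp add: sturmian_def)
  define s where "s = (\<lambda>i. u (N + i))"
  have bin_s: "\<forall>i. s i \<in> {0,1}" using bin by (simp add: s_def)
  have "L \<ge> 1" using no_recurrence by (cases L) (auto simp: factor_def)
  have "blocks_of s L \<subseteq> blocks_of u L"
    by (auto simp: blocks_of_eq_range_factor s_def factor_suffix)
  moreover have "factor u m L \<notin> blocks_of s L"
    using no_recurrence by (auto simp: blocks_of_eq_range_factor s_def factor_suffix) (metis le_add1)
  ultimately have "card (blocks_of s L) < card (blocks_of u L)"
    using finite_blocks_of[OF bin]
    by (metis psubsetI psubset_card_mono blocks_of_eq_range_factor rangeI)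
  hence s_L: "card (blocks_of s L) \<le> L" using st \<open>L \<ge> 1\<close> by (simp add: sturmian_def)
  then obtain k where "k < L" and inj: "inj_on (take k) (blocks_of s (Suc k))"
    using exists_length_without_right_special[OF bin_s] by blast
  have "N + L + 1 = card (blocks_of u (N + L))"
    using st \<open>L \<ge> 1\<close> by (simp add: sturmian_def)
  also have "\<dots> \<le> N + card (blocks_of s (N + L))"
    using card_blocks_of_le_suffix[OF bin] by (simp add: s_def)
  also have "\<dots> \<le> N + card (blocks_of s k)"
    using card_blocks_of_le_if_no_right_special[OF bin_s inj] \<open>k < L\<close> by simp
  also have "\<dots> \<le> N + card (blocks_of s L)"
    using card_blocks_of_mono[OF bin_s] \<open>k < L\<close> by simp
  finally show False using s_L by simp
qed

lemma u_in_Xplus: "u \<in> Xplus u"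
  unfolding Xplus_def by (auto intro!: exI[of _ 0])

lemma Xplus_shift: "x \<in> Xplus u \<Longrightarrow> (\<lambda>i. x (i + k)) \<in> Xplus u"
  unfolding Xplus_def
proof clarify
  fix n assume "\<forall>n. \<exists>m. \<forall>i<n. x i = u (m + i)"
  then obtain m where "\<forall>i<n + k. x i = u (m + i)" by blast
  hence "\<forall>i<n. x (i + k) = u ((m + k) + i)" by (simp add: add.commute add.left_commute)
  thus "\<exists>m. \<forall>i<n. x (i + k) = u (m + i)" by blast
qed

lemma Xtilde_shift: "b \<in> Xtilde u \<Longrightarrow> (\<lambda>j. b (j + d)) \<in> Xtilde u"
  unfolding Xtilde_def
proof clarify
  fix p assume "\<forall>p. (\<lambda>i. b (p + int i)) \<in> Xplus u"
  hence "(\<lambda>i. b ((p + d) + int i)) \<in> Xplus u" by blast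
  thus "(\<lambda>i. b (p + int i + d)) \<in> Xplus u" by (simp add: ac_simps)
qed

lemma Xplus_binary:
  assumes bin: "\<forall>i. u i \<in> {0,1}" and "x \<in> Xplus u"
  shows "x i \<in> {0,1}"
proof -
  obtain m where "\<forall>t<Suc i. x t = u (m + t)" using \<open>x \<in> Xplus u\<close> unfolding Xplus_def by blast
  thus ?thesis using bin by simp
qed

lemma Xtilde_binary:
  assumes bin: "\<forall>i. u i \<in> {0,1}" and "b \<in> Xtilde u"
  shows "b j \<in> {0,1}"
  using Xplus_binary[OF bin, of "\<lambda>i. b (j + int i)" 0] \<open>b \<in> Xtilde u\<close>
  by (simp add: Xtilde_def)

text \<open>Recurrence of the block x_0 ... x_{n-1} at a positive position provides a letter
  in front of it.\<close>

lemma sturmian_block_extends_left: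
  assumes st: "sturmian u" and x: "x \<in> Xplus u"
  shows "\<exists>c\<in>{0,1}. \<exists>m. factor u m (Suc n) = c # factor x 0 n"
proof -
  obtain m where m: "\<forall>i<n. x i = u (m + i)" using x unfolding Xplus_def by blast
  obtain m' where m': "m' \<ge> 1" "factor u m' n = factor u m n"
    using sturmian_factor_recurs[OF st] by blast
  have "factor u (m' - 1) (Suc n) = u (m' - 1) # factor x 0 n"
    using m m' by (auto simp: list_eq_iff_nth_eq nth_Cons factor_eq_iff split: nat.split)
  moreover have "u (m' - 1) \<in> {0,1}" using st by (simp add: sturmian_def)
  ultimately show ?thesis by blast
qed

text \<open>One of the two letters extends arbitrarily long prefixes of x, hence all of them.\<close>

lemma sturmian_Xplus_extends_left:
  assumes st: "sturmian u" and x: "x \<in> Xplus u"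
  shows "\<exists>c. case_nat c x \<in> Xplus u"
proof -
  define extends_often where
    "extends_often c \<longleftrightarrow> (\<forall>n. \<exists>n'\<ge>n. \<exists>m. factor u m (Suc n') = c # factor x 0 n')" for c
  have "extends_often 0 \<or> extends_often 1"
  proof (rule ccontr)
    assume "\<not> (extends_often 0 \<or> extends_often 1)"
    then obtain n0 n1 where "\<forall>n'\<ge>n0. \<forall>m. factor u m (Suc n') \<noteq> 0 # factor x 0 n'"
      and "\<forall>n'\<ge>n1. \<forall>m. factor u m (Suc n') \<noteq> 1 # factor x 0 n'"
      unfolding extends_often_def by blast
    with sturmian_block_extends_left[OF st x, of "max n0 n1"] show False by auto
  qed
  then obtain c where c: "extends_often c" by blast
  have "\<exists>m. \<forall>i<n. case_nat c x i = u (m + i)" for n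
  proof -
    obtain n' m where "n' \<ge> n" and w: "factor u m (Suc n') = c # factor x 0 n'"
      using c extends_often_def by blast
    have "case_nat c x i = u (m + i)" if "i < n" for i
    proof -
      have "i < Suc n'" using that \<open>n' \<ge> n\<close> by simp
      hence "factor u m (Suc n') ! i = (c # factor x 0 n') ! i" using w by simp
      thus ?thesis using \<open>i < Suc n'\<close> by (cases i) auto
    qed
    thus ?thesis by blast
  qed
  thus ?thesis unfolding Xplus_def by blast
qed

text \<open>Iterating the left extension gives a sequence y of points of X_u^+, each the
  shift of the next; b reads position j of the two-sided sequence from y k for any k \<ge> -j.\<close>

lemma sturmian_two_sided_extension:
  assumes st: "sturmian u"
  shows "\<exists>b\<in>Xtilde u. \<forall>j\<ge>0. b j = u (nat j)"
proof -
  define f where "f x = case_nat (SOME c. case_nat c x \<in> Xplus u) x" for x :: "nat \<Rightarrow> nat"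
  have f_in: "x \<in> Xplus u \<Longrightarrow> f x \<in> Xplus u" for x
    unfolding f_def using sturmian_Xplus_extends_left[OF st] by (metis someI_ex)
  define y where "y k = (f ^^ k) u" for k
  have y_in: "y k \<in> Xplus u" for k by (induction k) (auto simp: y_def u_in_Xplus f_in)
  have y_shift: "y (k + d) (i + d) = y k i" for k d i
    by (induction d) (auto simp: y_def f_def)
  define b where "b j = y (nat (- j)) (nat (j + int (nat (- j))))" for j
  have b_y: "b j = y k (nat (j + int k))" if "j + int k \<ge> 0" for j k
  proof -
    have "nat (- j) \<le> k" using that by simp
    then obtain d where d: "k = nat (- j) + d" using le_Suc_ex by blast
    have "nat (j + int k) = nat (j + int (nat (- j))) + d" using that unfolding d
      by (cases "j \<le> 0") auto
    thus ?thesis by (simp add: b_def d y_shift)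
  qed
  have "(\<lambda>i. b (p + int i)) \<in> Xplus u" for p
  proof -
    have "b (p + int i) = y (nat (- p)) (i + nat (p + int (nat (- p))))" for i
    proof -
      have "nat (p + int i + int (nat (- p))) = i + nat (p + int (nat (- p)))"
        by (cases "p \<le> 0") auto
      thus ?thesis using b_y[of "p + int i" "nat (- p)"] by simp
    qed
    thus ?thesis using Xplus_shift[OF y_in] by simp
  qed
  hence "b \<in> Xtilde u" by (simp add: Xtilde_def)
  moreover have "\<forall>j\<ge>0. b j = u (nat j)" using b_y[of _ 0] by (simp add: y_def)
  ultimately show ?thesis by blast
qed

lemma sturmian_occurs_factor:
  assumes st: "sturmian u"
  shows "occurs u (factor u m n)"
proof -
  obtain b where b: "b \<in> Xtilde u" "\<forall>j\<ge>0. b j = u (nat j)"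
    using sturmian_two_sided_extension[OF st] by blast
  define b' where "b' j = b (j + (int m + int n - 1))" for j
  have "b' \<in> Xtilde u" using Xtilde_shift[OF b(1)] by (simp add: b'_def[abs_def])
  moreover have "ends_with b' (factor u m n)"
    unfolding ends_with_def
  proof (intro allI impI)
    fix i assume "i < length (factor u m n)"
    hence i: "i < n" by simp
    have "b' (int i - int (length (factor u m n)) + 1) = b (int (m + i))"
      by (simp add: b'_def add.commute)
    also have "\<dots> = u (m + i)" using b(2) by (simp del: of_nat_add)
    finally show "b' (int i - int (length (factor u m n)) + 1) = factor u m n ! i" using i by simp
  qed
  ultimately show ?thesis unfolding occurs_def by blast
qed

lemma occurs_imp_in_blocks_of:
  assumes "occurs u w"
  shows "w \<in> blocks_of u (length w)"
proof -
  obtain b where b: "b \<in> Xtilde u" "ends_with b w" using assms by (auto simp: occurs_def)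
  have "(\<lambda>i. b (1 - int (length w) + int i)) \<in> Xplus u" using b(1) by (simp add: Xtilde_def)
  then obtain m where m: "\<forall>i<length w. b (1 - int (length w) + int i) = u (m + i)"
    unfolding Xplus_def by blast
  have "w = factor u m (length w)"
  proof (rule nth_equalityI)
    fix i assume "i < length w"
    moreover have "b (int i - int (length w) + 1) = w ! i"
      using b(2) \<open>i < length w\<close> by (simp add: ends_with_def)
    ultimately show "w ! i = factor u m (length w) ! i" using m by (simp add: algebra_simps)
  qed simp
  thus ?thesis by (auto simp: blocks_of_eq_range_factor)
qed

lemma sturmian_occurring_blocks:
  assumes st: "sturmian u"
  shows "{w. length w = n \<and> occurs u w} = blocks_of u n"
  using sturmian_occurs_factor[OF st] occurs_imp_in_blocks_of
  by (auto simp: blocks_of_eq_range_factor)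

lemma ends_with_snoc:
  "ends_with b (a @ [c]) \<longleftrightarrow> b 0 = c \<and> ends_with (\<lambda>j. b (j - 1)) a"
  unfolding ends_with_def
proof safe
  assume h: "\<forall>i<length (a @ [c]). b (int i - int (length (a @ [c])) + 1) = (a @ [c]) ! i"
  from h[rule_format, of "length a"] show "b 0 = c" by simp
  fix i assume "i < length a"
  with h[rule_format, of i] show "b (int i - int (length a) + 1 - 1) = a ! i"
    by (simp add: nth_append algebra_simps)
next
  fix i
  assume h: "\<forall>i<length a. b (int i - int (length a) + 1 - 1) = a ! i"
    and i: "i < length (a @ [b 0])"
  show "b (int i - int (length (a @ [b 0])) + 1) = (a @ [b 0]) ! i"
  proof (cases "i < length a")
    case True
    thus ?thesis using h[rule_format, of i] by (simp add: nth_append algebra_simps)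
  next
    case False
    hence "i = length a" using i by simp
    thus ?thesis by simp
  qed
qed

lemma ends_with_drop: "ends_with b a \<Longrightarrow> ends_with b (drop k a)"
  unfolding ends_with_def
proof (intro allI impI)
  fix i assume h: "\<forall>i<length a. b (int i - int (length a) + 1) = a ! i"
    and i: "i < length (drop k a)"
  hence "k + i < length a" by simp
  from h[rule_format, OF this] i show "b (int i - int (length (drop k a)) + 1) = drop k a ! i"
    by (simp add: of_nat_diff algebra_simps)
qed

lemma ends_with_appendD: "ends_with b (a @ v) \<Longrightarrow> ends_with (\<lambda>j. b (j - int (length v))) a"
  unfolding ends_with_def
proof (intro allI impI)
  fix i assume h: "\<forall>i<length (a @ v). b (int i - int (length (a @ v)) + 1) = (a @ v) ! i"
    and i: "i < length a"
  from h[rule_format, of i] i show "b (int i - int (length a) + 1 - int (length v)) = a ! i"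
    by (simp add: nth_append algebra_simps)
qed

lemma occurs_appendD: "occurs u (a @ v) \<Longrightarrow> occurs u a"
  unfolding occurs_def using ends_with_appendD Xtilde_shift[where d = "- int (length v)"]
  by fastforce

lemma occurs_take: "occurs u w \<Longrightarrow> occurs u (take k w)"
  using occurs_appendD[of u "take k w" "drop k w"] by simp

lemma occurs_drop: "occurs u a \<Longrightarrow> occurs u (drop k a)"
  unfolding occurs_def using ends_with_drop by blast

lemma fol_subset_fol_drop: "fol u a \<subseteq> fol u (drop k a)"
  unfolding fol_def using ends_with_drop by blast

lemma occurs_iff_fol_nonempty: "occurs u a \<longleftrightarrow> fol u a \<noteq> {}"
  unfolding occurs_def fol_def by auto

lemma mem_fol_snoc_iff:
  "x \<in> fol u (a @ [c]) \<longleftrightarrow> (\<exists>y\<in>fol u a. y 1 = c \<and> x = (\<lambda>i. y (Suc i)))"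
proof
  assume "x \<in> fol u (a @ [c])"
  then obtain b where b: "b \<in> Xtilde u" "ends_with b (a @ [c])" and x: "x = (\<lambda>i. b (int i))"
    unfolding fol_def by blast
  define b' where "b' j = b (j - 1)" for j
  have "b' \<in> Xtilde u" using Xtilde_shift[OF b(1), of "-1"] by (simp add: b'_def[abs_def])
  moreover have "ends_with b' a" using b(2) ends_with_snoc by (simp add: b'_def[abs_def])
  ultimately have "(\<lambda>i. b' (int i)) \<in> fol u a" unfolding fol_def by blast
  moreover have "b' (int 1) = c" using b(2) ends_with_snoc by (simp add: b'_def)
  moreover have "x = (\<lambda>i. b' (int (Suc i)))" by (simp add: x b'_def)
  ultimately show "\<exists>y\<in>fol u a. y 1 = c \<and> x = (\<lambda>i. y (Suc i))" by fastforce
next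
  assume "\<exists>y\<in>fol u a. y 1 = c \<and> x = (\<lambda>i. y (Suc i))"
  then obtain b' where b': "b' \<in> Xtilde u" "ends_with b' a" "b' 1 = c"
    and x: "x = (\<lambda>i. b' (int (Suc i)))"
    unfolding fol_def by auto
  define b where "b j = b' (j + 1)" for j
  have "b \<in> Xtilde u" using Xtilde_shift[OF b'(1), of 1] by (simp add: b_def[abs_def])
  moreover have "(\<lambda>j. b (j - 1)) = b'" by (simp add: b_def)
  hence "ends_with b (a @ [c])" using b' ends_with_snoc by (simp add: b_def)
  moreover have "x = (\<lambda>i. b (int i))" by (simp add: x b_def add.commute)
  ultimately show "x \<in> fol u (a @ [c])" unfolding fol_def by blast
qed

lemma fol_snoc_cong: "fol u a = fol u a' \<Longrightarrow> fol u (a @ [c]) = fol u (a' @ [c])"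
  by (auto simp: mem_fol_snoc_iff)

lemma occurs_snoc_iff: "occurs u (a @ [c]) \<longleftrightarrow> (\<exists>y\<in>fol u a. y 1 = c)"
  unfolding occurs_iff_fol_nonempty using mem_fol_snoc_iff by blast

lemma occurs_last_binary:
  assumes bin: "\<forall>i. u i \<in> {0,1}" and "occurs u a" and "a \<noteq> []"
  shows "last a \<in> {0,1}"
proof -
  obtain b where b: "b \<in> Xtilde u" "ends_with b a" using \<open>occurs u a\<close> by (auto simp: occurs_def)
  have "b (int (length a - 1) - int (length a) + 1) = a ! (length a - 1)"
    using b(2) \<open>a \<noteq> []\<close> unfolding ends_with_def by simp
  moreover have "int (length a - 1) - int (length a) + 1 = 0" using \<open>a \<noteq> []\<close> by (cases a) auto
  ultimately have "b 0 = last a" using \<open>a \<noteq> []\<close> by (simp add: last_conv_nth)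
  thus ?thesis using Xtilde_binary[OF bin b(1)] by metis
qed

lemma significant_singleton:
  assumes bin: "\<forall>i. u i \<in> {0,1}" and "occurs u [x]"
  shows "significant u [x]"
  using occurs_last_binary[OF bin \<open>occurs u [x]\<close>] \<open>occurs u [x]\<close> by (auto simp: significant_def)

definition sig_index :: "(nat \<Rightarrow> nat) \<Rightarrow> nat list \<Rightarrow> nat" where
  "sig_index u a = (LEAST k. k < length a \<and> significant u (drop k a))"

lemma sig_eq_drop_sig_index: "sig u a = drop (sig_index u a) a"
  by (simp add: sig_def sig_index_def)

lemma sig_index_spec:
  assumes bin: "\<forall>i. u i \<in> {0,1}" and oc: "occurs u a" and "a \<noteq> []"
  shows sig_index_less_length: "sig_index u a < length a"
    and significant_sig: "significant u (sig u a)"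
    and not_significant_drop_below_sig_index:
      "\<And>k. k < sig_index u a \<Longrightarrow> \<not> significant u (drop k a)"
proof -
  have "drop (length a - 1) a = [last a]" using \<open>a \<noteq> []\<close>
    by (metis append_butlast_last_id append_eq_conv_conj length_butlast)
  hence last_sig: "length a - 1 < length a \<and> significant u (drop (length a - 1) a)"
    using significant_singleton[OF bin] occurs_drop[OF oc, of "length a - 1"] \<open>a \<noteq> []\<close> by auto
  show "sig_index u a < length a" "significant u (sig u a)"
    using LeastI[of "\<lambda>k. k < length a \<and> significant u (drop k a)", OF last_sig]
    by (simp_all add: sig_index_def sig_eq_drop_sig_index)
  fix k assume "k < sig_index u a"
  thus "\<not> significant u (drop k a)"
    using not_less_Least[of k "\<lambda>k. k < length a \<and> significant u (drop k a)"]
      \<open>sig_index u a < length a\<close>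
    by (simp add: sig_index_def)
qed

lemma fol_drop_eq_below_sig_index:
  assumes bin: "\<forall>i. u i \<in> {0,1}" and oc: "occurs u a" and ne: "a \<noteq> []"
  shows "k \<le> sig_index u a \<Longrightarrow> fol u (drop k a) = fol u a"
proof (induction k)
  case 0
  show ?case by simp
next
  case (Suc k)
  hence k: "k < sig_index u a" by simp
  have "length (drop k a) \<ge> 2" using sig_index_less_length[OF bin oc ne] k by simp
  hence "\<not> fol u (drop k a) \<subset> fol u (drop (Suc k) a)"
    using not_significant_drop_below_sig_index[OF bin oc ne k] occurs_drop[OF oc, of k]
    by (auto simp: significant_def drop_Suc tl_drop)
  moreover have "fol u (drop k a) \<subseteq> fol u (drop (Suc k) a)"
    using fol_subset_fol_drop[of u "drop k a" 1] by (simp add: drop_Suc tl_drop)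
  ultimately show ?case using Suc k by simp
qed

lemma fol_sig:
  assumes "\<forall>i. u i \<in> {0,1}" and "occurs u a" and "a \<noteq> []"
  shows "fol u (sig u a) = fol u a"
  using fol_drop_eq_below_sig_index[OF assms order_refl] by (simp add: sig_eq_drop_sig_index)

lemma last_sig:
  assumes "\<forall>i. u i \<in> {0,1}" and "occurs u a" and "a \<noteq> []"
  shows "last (sig u a) = last a"
  using sig_index_less_length[OF assms] by (simp add: sig_eq_drop_sig_index last_drop)

lemma sig_singleton:
  assumes "\<forall>i. u i \<in> {0,1}" and "occurs u [x]"
  shows "sig u [x] = [x]"
  using sig_index_less_length[OF assms] by (simp add: sig_eq_drop_sig_index)

lemma sig_drop_below_sig_index:
  assumes bin: "\<forall>i. u i \<in> {0,1}" and oc: "occurs u a" and ne: "a \<noteq> []"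
    and "k \<le> sig_index u a"
  shows "sig u (drop k a) = sig u a"
proof -
  have "sig_index u (drop k a) = sig_index u a - k"
    unfolding sig_index_def[of u "drop k a"]
  proof (rule Least_equality)
    show "sig_index u a - k < length (drop k a)
        \<and> significant u (drop (sig_index u a - k) (drop k a))"
      using sig_index_less_length[OF bin oc ne] significant_sig[OF bin oc ne] \<open>k \<le> sig_index u a\<close>
      by (simp add: sig_eq_drop_sig_index)
  next
    fix j assume "j < length (drop k a) \<and> significant u (drop j (drop k a))"
    hence "k + j < length a \<and> significant u (drop (k + j) a)" by (auto simp: add.commute)
    hence "sig_index u a \<le> k + j" unfolding sig_index_def by (rule Least_le)
    thus "sig_index u a - k \<le> j" by simp
  qed
  thus ?thesis using \<open>k \<le> sig_index u a\<close> by (simp add: sig_eq_drop_sig_index)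
qed

text \<open>Below the significant index, dropping one more letter does not change the follower
  set, and appending a letter preserves equality of follower sets.\<close>

lemma not_significant_drop_snoc:
  assumes bin: "\<forall>i. u i \<in> {0,1}" and oc: "occurs u a" and ne: "a \<noteq> []"
    and k: "k < sig_index u a"
  shows "\<not> significant u (drop k (a @ [c]))"
proof -
  have k_a: "k < length a" using k sig_index_less_length[OF bin oc ne] by simp
  have "fol u (drop k a) = fol u (drop (Suc k) a)"
    using fol_drop_eq_below_sig_index[OF bin oc ne, of k]
      fol_drop_eq_below_sig_index[OF bin oc ne, of "Suc k"] k
    by simp
  hence "fol u (drop k a @ [c]) = fol u (drop (Suc k) a @ [c])" by (rule fol_snoc_cong)
  moreover have "length (drop k a @ [c]) \<ge> 2" using k_a by simp
  ultimately show ?thesis using k_a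
    by (auto simp: significant_def drop_Suc tl_drop Suc_le_eq simp del: length_drop)
qed

lemma sig_snoc:
  assumes bin: "\<forall>i. u i \<in> {0,1}" and oc: "occurs u a" and ne: "a \<noteq> []"
    and oc_c: "occurs u (a @ [c])"
  shows "sig u (a @ [c]) = sig u (sig u a @ [c])"
proof -
  have "sig_index u a \<le> sig_index u (a @ [c])"
  proof (rule ccontr)
    assume "\<not> ?thesis"
    hence "\<not> significant u (drop (sig_index u (a @ [c])) (a @ [c]))"
      using not_significant_drop_snoc[OF bin oc ne] by simp
    thus False using significant_sig[OF bin oc_c] by (simp add: sig_eq_drop_sig_index)
  qed
  hence "sig u (a @ [c]) = sig u (drop (sig_index u a) (a @ [c]))"
    using sig_drop_below_sig_index[OF bin oc_c] by simp
  also have "drop (sig_index u a) (a @ [c]) = sig u a @ [c]"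
    using sig_index_less_length[OF bin oc ne] by (simp add: sig_eq_drop_sig_index)
  finally show ?thesis .
qed

definition hb_path_of :: "(nat \<Rightarrow> nat) \<Rightarrow> nat list \<Rightarrow> nat list list" where
  "hb_path_of u w = map (\<lambda>i. sig u (take (Suc i) w)) [0..<length w]"

lemma length_hb_path_of [simp]: "length (hb_path_of u w) = length w"
  by (simp add: hb_path_of_def)

lemma nth_hb_path_of: "i < length w \<Longrightarrow> hb_path_of u w ! i = sig u (take (Suc i) w)"
  by (simp add: hb_path_of_def del: upt_Suc)

lemma hb_arrow_sig_snoc:
  assumes bin: "\<forall>i. u i \<in> {0,1}" and oc: "occurs u (v @ [c])" and "v \<noteq> []"
  shows "hb_arrow u (sig u v) (sig u (v @ [c]))"
proof -
  have oc_v: "occurs u v" using occurs_appendD[OF oc] .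
  have "sig u v @ [c] = drop (sig_index u v) (v @ [c])"
    using sig_index_less_length[OF bin oc_v \<open>v \<noteq> []\<close>] by (simp add: sig_eq_drop_sig_index)
  hence "occurs u (sig u v @ [c])" using occurs_drop[OF oc] by simp
  thus ?thesis
    unfolding hb_arrow_def
    using sig_snoc[OF bin oc_v \<open>v \<noteq> []\<close> oc] significant_sig[OF bin oc_v \<open>v \<noteq> []\<close>]
      significant_sig[OF bin oc] by auto
qed

lemma hb_path_hb_path_of:
  assumes bin: "\<forall>i. u i \<in> {0,1}" and oc: "occurs u w" and "w \<noteq> []"
  shows "hb_path u (hb_path_of u w)"
  unfolding hb_path_def
proof (intro conjI allI impI ballI)
  show "hb_path_of u w \<noteq> []" using \<open>w \<noteq> []\<close> by (simp add: hb_path_of_def)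
next
  fix v assume "v \<in> set (hb_path_of u w)"
  then obtain i where "i < length w" "v = sig u (take (Suc i) w)" by (auto simp: hb_path_of_def)
  moreover have "take (Suc i) w \<noteq> []" using \<open>w \<noteq> []\<close> by simp
  ultimately show "significant u v" using significant_sig[OF bin occurs_take[OF oc]] by simp
next
  fix i assume i: "Suc i < length (hb_path_of u w)"
  hence snoc: "take (Suc (Suc i)) w = take (Suc i) w @ [w ! Suc i]"
    by (simp add: take_Suc_conv_app_nth)
  have "hb_arrow u (sig u (take (Suc i) w)) (sig u (take (Suc (Suc i)) w))"
    unfolding snoc using occurs_take[OF oc, of "Suc (Suc i)"] \<open>w \<noteq> []\<close>
    by (intro hb_arrow_sig_snoc[OF bin]) (simp_all add: snoc)
  thus "hb_arrow u (hb_path_of u w ! i) (hb_path_of u w ! Suc i)"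
    using i by (simp add: nth_hb_path_of)
qed

lemma hd_hb_path_of:
  assumes bin: "\<forall>i. u i \<in> {0,1}" and oc: "occurs u w" and "w \<noteq> []"
  shows "hd (hb_path_of u w) \<in> {[0], [1]}"
proof -
  have w0: "take (Suc 0) w = [w ! 0]" using \<open>w \<noteq> []\<close> by (cases w) auto
  hence oc0: "occurs u [w ! 0]" using occurs_take[OF oc, of "Suc 0"] by simp
  have "hd (hb_path_of u w) = sig u (take (Suc 0) w)"
    using \<open>w \<noteq> []\<close> by (simp add: hb_path_of_def hd_map)
  hence "hd (hb_path_of u w) = [w ! 0]" using sig_singleton[OF bin oc0] w0 by simp
  moreover have "w ! 0 \<in> {0,1}" using occurs_last_binary[OF bin oc0] by simp
  ultimately show ?thesis by auto
qed

lemma map_last_hb_path_of: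
  assumes bin: "\<forall>i. u i \<in> {0,1}" and oc: "occurs u w"
  shows "map last (hb_path_of u w) = w"
proof (rule nth_equalityI)
  fix i assume "i < length (map last (hb_path_of u w))"
  hence i: "i < length w" by simp
  hence "take (Suc i) w \<noteq> []" by (cases w) auto
  hence "last (sig u (take (Suc i) w)) = last (take (Suc i) w)"
    using last_sig[OF bin occurs_take[OF oc]] by blast
  also have "\<dots> = w ! i" using i by (simp add: take_Suc_conv_app_nth)
  finally show "map last (hb_path_of u w) ! i = w ! i" using i by (simp add: nth_hb_path_of)
qed simp

text \<open>An arrow leaving sig v behaves as one leaving v, since both blocks have the same
  follower set.\<close>

lemma hb_path_prefix_sig:
  assumes bin: "\<forall>i. u i \<in> {0,1}" and p: "hb_path u p" and hd: "hd p \<in> {[0], [1]}"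
    and "i < length p"
  shows "occurs u (take (Suc i) (map last p)) \<and> p ! i = sig u (take (Suc i) (map last p))"
  using \<open>i < length p\<close>
proof (induction i)
  case 0
  have "p \<noteq> []" using p by (simp add: hb_path_def)
  hence p0: "p ! 0 = [last (p ! 0)]" using hd by (auto simp: hd_conv_nth)
  have "occurs u (p ! 0)" using p \<open>p \<noteq> []\<close> by (auto simp: hb_path_def significant_def)
  moreover have "take 1 (map last p) = [last (p ! 0)]" using \<open>p \<noteq> []\<close> by (cases p) auto
  ultimately show ?case using p0 sig_singleton[OF bin] by (metis One_nat_def)
next
  case (Suc i)
  define v where "v = take (Suc i) (map last p)"
  have IH: "occurs u v" "p ! i = sig u v" using Suc by (simp_all add: v_def)
  have "v \<noteq> []" using Suc.prems by (cases p) (simp_all add: v_def)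
  obtain c where c: "occurs u (p ! i @ [c])" "p ! Suc i = sig u (p ! i @ [c])"
    using p Suc.prems by (auto simp: hb_path_def hb_arrow_def)
  have oc_c: "occurs u (v @ [c])"
    using c(1) IH fol_sig[OF bin IH(1) \<open>v \<noteq> []\<close>] by (simp add: occurs_snoc_iff)
  have sig_c: "p ! Suc i = sig u (v @ [c])"
    using c(2) IH(2) sig_snoc[OF bin IH(1) \<open>v \<noteq> []\<close> oc_c] by simp
  hence "map last p ! Suc i = c" using Suc.prems last_sig[OF bin oc_c] by simp
  hence "take (Suc (Suc i)) (map last p) = v @ [c]"
    using Suc.prems by (simp add: v_def take_Suc_conv_app_nth)
  thus ?case using oc_c sig_c by simp
qed

lemma hb_path_eq_hb_path_of:
  assumes bin: "\<forall>i. u i \<in> {0,1}" and p: "hb_path u p" and hd: "hd p \<in> {[0], [1]}"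
  shows "occurs u (map last p)" and "p = hb_path_of u (map last p)"
proof -
  have "p \<noteq> []" using p by (simp add: hb_path_def)
  thus "occurs u (map last p)"
    using hb_path_prefix_sig[OF bin p hd, of "length p - 1"] by simp
  show "p = hb_path_of u (map last p)"
    using hb_path_prefix_sig[OF bin p hd] by (intro nth_equalityI) (simp_all add: nth_hb_path_of)
qed

theorem theorem5p10:
  fixes u :: "nat \<Rightarrow> nat" and n :: nat
  assumes "sturmian u" and "n \<ge> 1"
  shows "card {p. hb_path u p \<and> length p = n \<and> hd p \<in> {[0], [1]}} = n + 1"
proof -
  have bin: "\<forall>i. u i \<in> {0,1}" using assms(1) by (simp add: sturmian_def)
  define W where "W = {w. length w = n \<and> occurs u w}"
  have "card W = n + 1"
    using sturmian_occurring_blocks[OF assms(1), of n] assms by (simp add: W_def sturmian_def)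
  moreover have "inj_on (hb_path_of u) W"
    using map_last_hb_path_of[OF bin] by (intro inj_on_inverseI[where g = "map last"]) (simp add: W_def)
  moreover have "{p. hb_path u p \<and> length p = n \<and> hd p \<in> {[0], [1]}} = hb_path_of u ` W"
  proof (intro equalityI subsetI)
    fix p assume "p \<in> hb_path_of u ` W"
    then obtain w where "p = hb_path_of u w" "occurs u w" "length w = n" by (auto simp: W_def)
    moreover have "w \<noteq> []" using \<open>length w = n\<close> \<open>n \<ge> 1\<close> by auto
    ultimately show "p \<in> {p. hb_path u p \<and> length p = n \<and> hd p \<in> {[0], [1]}}"
      using hb_path_hb_path_of[OF bin] hd_hb_path_of[OF bin] by simp
  next
    fix p assume "p \<in> {p. hb_path u p \<and> length p = n \<and> hd p \<in> {[0], [1]}}"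
    thus "p \<in> hb_path_of u ` W"
      using hb_path_eq_hb_path_of[OF bin] by (auto simp: W_def intro!: image_eqI[of _ _ "map last p"])
  qed
  ultimately show ?thesis by (simp add: card_image)
qed

end
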